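(* Let $G$ be a countable discrete group, $m$ a probability measure on $G$, and $(X,\mu)$ a standard probability space. If $a,b\in\mathrm{Stat}(G,m,X,\mu)$ are weakly equivalent ($a\sim b$), then their Furstenberg entropies coincide: $h_m(X,\mu,a)=h_m(X,\mu,b)$.
   Context: A measurable action $a$ of $G$ on $(X,\mu)$ is $m$-stationary if $\sum_{g\in G} m(g)\,\mu(g^aA)=\mu(A)$ for every measurable $A\subseteq X$, where $g^a$ denotes the (nonsingular) transformation by which $g$ acts in $a$. $\mathrm{Stat}(G,m,X,\mu)$ is the set of such actions. For $a,b\in\mathrm{Stat}(G,m,X,\mu)$, $a\preceq b$ means: for every $\epsilon>0$, finite $F\subseteq G$ and measurable $A_1,\ldots,A_n\subseteq X$ there are measurable $B_1,\ldots,B_n\subseteq X$ with $|\mu(g^aA_i\cap A_j)-\mu(g^bB_i\cap B_j)|<\epsilon$ for all $g\in F$, $i,j\le n$; and $a\sim b$ means $a\preceq b$ and $b\preceq a$. For $g\in G$ let $g^a\mu$ denote the measure $A\mapsto\mu(g^aA)$ (absolutely continuous w.r.t. $\mu$). The Furstenberg entropy is $h_m(X,\mu,a)=-\sum_{g\in G}m(g)\int_X\log\frac{d g^a\mu}{d\mu}(x)\,d\mu(x)\in[0,\infty]$. *)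

theory Defs
  imports "HOL-Probability.Probability"
begin

text \<open>
  The countable discrete group G is a type 'g of class group_add
  (a not necessarily commutative group, written additively: + is the group
  product, 0 the identity, uminus the inverse) and of class countable.
  A measurable action a assigns to g the measurable map a g : X -> X, with
  a 0 = id and a (g + h) = a g o a h; the transformation g^a is a g.
\<close>

definition standard_prob_space :: "'x::polish_space measure \<Rightarrow> bool" where
  "standard_prob_space M \<longleftrightarrow> sets M = sets (borel :: 'x measure) \<and> prob_space M"

text \<open>The measure g^a mu : A \<mapsto> mu(g^a A).  Since a g is a bijection with
  measurable inverse a (-g), we have g^a A = (a (-g))^{-1} A, so this is the
  push-forward of mu under a (-g).\<close>
definition act_measure :: "'x measure \<Rightarrow> ('g::group_add \<Rightarrow> 'x \<Rightarrow> 'x) \<Rightarrow> 'g \<Rightarrow> 'x measure" where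
  "act_measure M a g = distr M M (a (- g))"

definition nonsingular_action :: "'x measure \<Rightarrow> ('g::group_add \<Rightarrow> 'x \<Rightarrow> 'x) \<Rightarrow> bool" where
  "nonsingular_action M a \<longleftrightarrow>
     (\<forall>g. a g \<in> measurable M M) \<and>
     a 0 = id \<and>
     (\<forall>g h. a (g + h) = a g \<circ> a h) \<and>
     (\<forall>g. absolutely_continuous M (act_measure M a g))"

definition stationary_action :: "'g::{group_add,countable} pmf \<Rightarrow> 'x measure \<Rightarrow> ('g \<Rightarrow> 'x \<Rightarrow> 'x) \<Rightarrow> bool" where
  "stationary_action m M a \<longleftrightarrow> nonsingular_action M a \<and>
     (\<forall>A \<in> sets M. infsum (\<lambda>g. pmf m g * measure M (a g ` A)) UNIV = measure M A)"

definition weakly_contained :: "'x measure \<Rightarrow> ('g::group_add \<Rightarrow> 'x \<Rightarrow> 'x) \<Rightarrow> ('g \<Rightarrow> 'x \<Rightarrow> 'x) \<Rightarrow> bool" where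
  "weakly_contained M a b \<longleftrightarrow>
     (\<forall>\<epsilon>::real. \<epsilon> > 0 \<longrightarrow> (\<forall>F::'g set. finite F \<longrightarrow> (\<forall>As. set As \<subseteq> sets M \<longrightarrow>
        (\<exists>Bs. length Bs = length As \<and> set Bs \<subseteq> sets M \<and>
           (\<forall>g\<in>F. \<forall>i<length As. \<forall>j<length As.
              \<bar>measure M (a g ` (As ! i) \<inter> As ! j) - measure M (b g ` (Bs ! i) \<inter> Bs ! j)\<bar> < \<epsilon>)))))"

definition weakly_equivalent :: "'x measure \<Rightarrow> ('g::group_add \<Rightarrow> 'x \<Rightarrow> 'x) \<Rightarrow> ('g \<Rightarrow> 'x \<Rightarrow> 'x) \<Rightarrow> bool" where
  "weakly_equivalent M a b \<longleftrightarrow> weakly_contained M a b \<and> weakly_contained M b a"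

text \<open>Furstenberg entropy h_m(X,mu,a) = - sum_g m(g) \<integral> log (d g^a mu / d mu) d mu,
  a value in [0,\<infinity>].  The possibly non-integrable integrand is split into
  its negative and positive parts: the value is
  \<Sum>_g m(g) \<integral> (log f_g)^- d\<mu>  -  \<Sum>_g m(g) \<integral> (log f_g)^+ d\<mu>,
  computed in the extended reals (the second term is always finite since
  (log f)^+ \<le> f and \<integral> f d\<mu> \<le> 1).\<close>
definition furstenberg_entropy :: "'g::{group_add,countable} pmf \<Rightarrow> 'x measure \<Rightarrow> ('g \<Rightarrow> 'x \<Rightarrow> 'x) \<Rightarrow> ereal" where
  "furstenberg_entropy m M a =
     (let f = (\<lambda>g x. enn2real (RN_deriv M (act_measure M a g) x)) in
      enn2ereal (\<integral>\<^sup>+ g. (\<integral>\<^sup>+ x. ennreal (- ln (f g x)) \<partial>M) \<partial>measure_pmf m)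
      - enn2ereal (\<integral>\<^sup>+ g. (\<integral>\<^sup>+ x. ennreal (ln (f g x)) \<partial>M) \<partial>measure_pmf m))"

end

theory Submission
  imports Defs
begin

text \<open>
  The Furstenberg entropy is the \<open>m\<close>-average of the relative entropies \<open>D(\<mu> \<parallel> g\<^sup>a \<mu>)\<close>.
  A relative entropy is the supremum over finite measurable partitions of
  \<open>\<Sum>\<^sub>i \<mu>(A\<^sub>i) log (\<mu>(A\<^sub>i) / \<mu>(g\<^sup>a A\<^sub>i))\<close>, and such a sum only depends on the numbers
  \<open>\<mu>(g\<^sup>a A\<^sub>i \<inter> A\<^sub>j)\<close> that weak containment approximates.  Given a partition for \<open>a\<close>,
  weak containment yields almost disjoint sets for \<open>b\<close> with almost the same statistics;
  disjointifying them gives a partition for \<open>b\<close> whose sum is, by lower semicontinuity of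
  \<open>p log (p / q)\<close>, at least the original one minus \<open>\<epsilon>\<close>.  So relative entropy is monotone
  under weak containment, hence equal for weakly equivalent actions.
\<close>

section \<open>Convexity estimates for \<open>y - 1 - log y\<close> and \<open>p log (p / q)\<close>\<close>

definition kl_integrand :: "real \<Rightarrow> real" where
  "kl_integrand y = y - 1 - ln y"

text \<open>For \<open>p > 0\<close> the value \<open>kl_cell p 0 = 0\<close> is junk (the true value is \<open>\<infinity>\<close>), whence the
  hypotheses \<open>0 < p \<Longrightarrow> 0 < q\<close> below.\<close>
definition kl_cell :: "real \<Rightarrow> real \<Rightarrow> real" where
  "kl_cell p q = - (p * ln (q / p))"

lemma kl_integrand_nonneg: "0 < y \<Longrightarrow> 0 \<le> kl_integrand y"
  unfolding kl_integrand_def using ln_le_minus_one[of y] by linarith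

lemma kl_integrand_ge_tangent:
  assumes "0 < y" "0 < t"
  shows "kl_integrand t + (1 - 1 / t) * (y - t) \<le> kl_integrand y"
proof -
  have "ln (y / t) \<le> y / t - 1" using assms by (intro ln_le_minus_one) auto
  then show ?thesis using assms by (simp add: kl_integrand_def ln_div field_simps)
qed

lemma kl_cell_ge_diff:
  assumes "0 \<le> p" "0 \<le> q" "0 < p \<Longrightarrow> 0 < q"
  shows "p - q \<le> kl_cell p q"
proof (cases "p = 0")
  case True
  then show ?thesis using assms by (simp add: kl_cell_def)
next
  case False
  then have "0 < p" "0 < q" using assms by auto
  then have "p * ln (q / p) \<le> p * (q / p - 1)"
    by (intro mult_left_mono ln_le_minus_one) auto
  also have "\<dots> = q - p" using \<open>0 < p\<close> by (simp add: field_simps)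
  finally show ?thesis by (simp add: kl_cell_def)
qed

lemma mult_ln_ge_neg_two_sqrt:
  assumes "0 < (x::real)"
  shows "- 2 * sqrt x \<le> x * ln x"
proof -
  have "- ln (sqrt x) = ln (1 / sqrt x)" using assms by (simp add: ln_div)
  also have "\<dots> \<le> 1 / sqrt x - 1" using assms by (intro ln_le_minus_one) auto
  finally have "2 - 2 / sqrt x \<le> ln x" using assms by (simp add: ln_sqrt)
  then have "x * (2 - 2 / sqrt x) \<le> x * ln x" using assms by (intro mult_left_mono) auto
  moreover have "x * (2 - 2 / sqrt x) = 2 * x - 2 * sqrt x"
    using assms by (simp add: field_simps)
  ultimately show ?thesis using assms by linarith
qed

lemma kl_cell_antimono:
  assumes "0 < p" "0 < q" "q \<le> s"
  shows "kl_cell p s \<le> kl_cell p q"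
proof -
  have "ln (q / p) \<le> ln (s / p)" using assms by (simp add: divide_right_mono)
  then show ?thesis unfolding kl_cell_def using assms by (simp add: mult_left_mono)
qed

text \<open>The tangent plane at \<open>(p, q)\<close> of the convex function \<open>kl_cell\<close>.\<close>
lemma kl_cell_ge_tangent:
  assumes "0 < p'" "0 < s" "0 < p" "0 < q"
  shows "p' * ln (p / q) + p' - p * s / q \<le> kl_cell p' s"
proof -
  define y where "y = s * p / (p' * q)"
  have "0 < y" using assms by (simp add: y_def)
  then have "p' * ln y \<le> p' * (y - 1)" using assms by (intro mult_left_mono ln_le_minus_one) auto
  moreover have "ln y = ln (s / p') + ln (p / q)" using assms by (simp add: y_def ln_div ln_mult)
  moreover have "p' * (y - 1) = p * s / q - p'" using assms by (simp add: y_def field_simps)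
  ultimately show ?thesis unfolding kl_cell_def by (simp add: algebra_simps)
qed

lemma kl_cell_ge_neg:
  assumes "0 < e" "0 \<le> p" "p \<le> (e / 2)\<^sup>2" "q \<le> 1" "0 < p \<Longrightarrow> 0 < q"
  shows "- e \<le> kl_cell p q"
proof (cases "p = 0")
  case True
  then show ?thesis using assms by (simp add: kl_cell_def)
next
  case False
  then have "0 < p" "0 < q" using assms by auto
  have "p * ln p = kl_cell p 1" using \<open>0 < p\<close> by (simp add: kl_cell_def ln_div)
  also have "\<dots> \<le> kl_cell p q" using \<open>0 < p\<close> \<open>0 < q\<close> assms by (intro kl_cell_antimono)
  finally have "- 2 * sqrt p \<le> kl_cell p q" using mult_ln_ge_neg_two_sqrt[OF \<open>0 < p\<close>] by linarith
  moreover have "sqrt p \<le> e / 2"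
    using assms real_sqrt_le_mono[OF assms(3)] by simp
  ultimately show ?thesis by linarith
qed

lemma kl_cell_lower_semicontinuous_pos:
  assumes "0 < p" "0 < q" "0 < e"
  shows "\<exists>d>0. \<forall>p' q'. \<bar>p' - p\<bar> \<le> d \<longrightarrow> q' \<le> q + d \<longrightarrow> (0 < p' \<longrightarrow> 0 < q')
           \<longrightarrow> kl_cell p q - e \<le> kl_cell p' q'"
proof -
  define C where "C = \<bar>ln (p / q)\<bar> + 1 + p / q"
  have "0 < C" using assms by (simp add: C_def add_pos_nonneg)
  define d where "d = min (p / 2) (e / C)"
  have "0 < d" using assms \<open>0 < C\<close> by (simp add: d_def)
  moreover have "kl_cell p q - e \<le> kl_cell p' q'"
    if p': "\<bar>p' - p\<bar> \<le> d" and q': "q' \<le> q + d" "0 < p' \<longrightarrow> 0 < q'" for p' q'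
  proof -
    have "\<bar>p' - p\<bar> \<le> p / 2" using p' by (simp add: d_def)
    then have "0 < p'" using assms by linarith
    have "kl_cell p q + (p' - p) * (ln (p / q) + 1) - d * (p / q)
        = p' * ln (p / q) + p' - p * (q + d) / q"
      using assms by (simp add: kl_cell_def field_simps ln_div)
    also have "\<dots> \<le> kl_cell p' (q + d)"
      using \<open>0 < p'\<close> \<open>0 < d\<close> assms by (intro kl_cell_ge_tangent) auto
    also have "\<dots> \<le> kl_cell p' q'" using \<open>0 < p'\<close> q' by (intro kl_cell_antimono) auto
    finally have step: "kl_cell p q + (p' - p) * (ln (p / q) + 1) - d * (p / q) \<le> kl_cell p' q'" .
    have "\<bar>(p' - p) * (ln (p / q) + 1)\<bar> \<le> d * (\<bar>ln (p / q)\<bar> + 1)"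
      unfolding abs_mult using p' by (intro mult_mono) auto
    with step have "kl_cell p q - d * C \<le> kl_cell p' q'"
      unfolding C_def by (simp add: abs_le_iff algebra_simps)
    moreover have "d * C \<le> e"
      using \<open>0 < C\<close> mult_right_mono[of d "e / C" C] by (simp add: d_def)
    ultimately show ?thesis by linarith
  qed
  ultimately show ?thesis by blast
qed

lemma kl_cell_lower_semicontinuous:
  assumes "0 \<le> p" "0 < p \<Longrightarrow> 0 < q" "0 < e"
  shows "\<exists>d>0. \<forall>p' q'. \<bar>p' - p\<bar> \<le> d \<longrightarrow> 0 \<le> p' \<longrightarrow> q' \<le> 1 \<longrightarrow> q' \<le> q + d
           \<longrightarrow> (0 < p' \<longrightarrow> 0 < q') \<longrightarrow> kl_cell p q - e \<le> kl_cell p' q'"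
proof (cases "p = 0")
  case True
  have "- e \<le> kl_cell p' q'"
    if "\<bar>p' - p\<bar> \<le> (e / 2)\<^sup>2" "0 \<le> p'" "q' \<le> 1" "0 < p' \<longrightarrow> 0 < q'" for p' q'
    using that True \<open>0 < e\<close> by (intro kl_cell_ge_neg) auto
  then show ?thesis using True \<open>0 < e\<close> by (intro exI[of _ "(e / 2)\<^sup>2"]) (auto simp: kl_cell_def)
next
  case False
  with kl_cell_lower_semicontinuous_pos[of p q e] assms show ?thesis by fastforce
qed

lemma kl_cell_lower_semicontinuous_uniform:
  fixes n :: nat
  assumes "\<And>i. i < n \<Longrightarrow> 0 \<le> p i" "\<And>i. i < n \<Longrightarrow> 0 < p i \<Longrightarrow> 0 < q i" "0 < e" "0 < r"
  obtains d where "0 < d" "d \<le> r"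
    and "\<And>i p' q'. i < n \<Longrightarrow> \<bar>p' - p i\<bar> \<le> d \<Longrightarrow> 0 \<le> p' \<Longrightarrow> q' \<le> 1 \<Longrightarrow> q' \<le> q i + d
           \<Longrightarrow> (0 < p' \<longrightarrow> 0 < q') \<Longrightarrow> kl_cell (p i) (q i) - e \<le> kl_cell p' q'"
proof -
  define \<Phi> where "\<Phi> i d \<longleftrightarrow> (\<forall>p' q'. \<bar>p' - p i\<bar> \<le> d \<longrightarrow> 0 \<le> p' \<longrightarrow> q' \<le> 1 \<longrightarrow> q' \<le> q i + d
      \<longrightarrow> (0 < p' \<longrightarrow> 0 < q') \<longrightarrow> kl_cell (p i) (q i) - e \<le> kl_cell p' q')" for i d
  define D where "D i = (SOME d. 0 < d \<and> \<Phi> i d)" for i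
  have D: "0 < D i \<and> \<Phi> i (D i)" if "i < n" for i
  proof -
    have "\<exists>d>0. \<Phi> i d"
      unfolding \<Phi>_def using assms that by (intro kl_cell_lower_semicontinuous) auto
    then show ?thesis unfolding D_def by (rule someI_ex)
  qed
  define d where "d = Min (insert r (D ` {..<n}))"
  have d_le: "d \<le> D i" if "i < n" for i using that by (simp add: d_def)
  show ?thesis
  proof (rule that)
    show "0 < d" "d \<le> r" using D assms(4) by (simp_all add: d_def)
    fix i p' q'
    assume i: "i < n" and p': "\<bar>p' - p i\<bar> \<le> d" "0 \<le> p'" and q': "q' \<le> 1" "q' \<le> q i + d"
      and "0 < p' \<longrightarrow> 0 < q'"
    moreover have "\<bar>p' - p i\<bar> \<le> D i" "q' \<le> q i + D i" using p' q' d_le[OF i] by linarith+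
    ultimately show "kl_cell (p i) (q i) - e \<le> kl_cell p' q'"
      using D[OF i] unfolding \<Phi>_def by blast
  qed
qed

lemma ennreal_kl_integrand_eq:
  assumes "0 < y"
  shows "ennreal (kl_integrand y) + 1 + ennreal (ln y) = ennreal y + ennreal (- ln y)"
proof (cases "0 \<le> ln y")
  case True
  then have "ennreal (kl_integrand y) + 1 + ennreal (ln y) = ennreal (kl_integrand y + 1 + ln y)"
    using kl_integrand_nonneg[OF assms] by simp
  then show ?thesis using True by (simp add: kl_integrand_def ennreal_neg)
next
  case False
  then have "ennreal (kl_integrand y) + 1 + ennreal (ln y) = ennreal (kl_integrand y + 1)"
    using kl_integrand_nonneg[OF assms] by (simp add: ennreal_neg)
  also have "kl_integrand y + 1 = y + - ln y" by (simp add: kl_integrand_def)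
  also have "\<dots> = ennreal y + ennreal (- ln y)" using False assms by (intro ennreal_plus) auto
  finally show ?thesis .
qed

lemma enn2ereal_add_minus_cancel:
  assumes "y \<noteq> \<top>"
  shows "enn2ereal (x + y) - enn2ereal y = enn2ereal x"
proof -
  obtain r where "y = ennreal r" "0 \<le> r" using assms by (cases y) auto
  then show ?thesis by (cases "enn2ereal x") (simp_all add: plus_ennreal.rep_eq)
qed

lemma ennreal_integral_le_nn_integral:
  assumes "integrable M f"
  shows "ennreal (integral\<^sup>L M f) \<le> (\<integral>\<^sup>+x. ennreal (f x) \<partial>M)"
proof -
  have "integral\<^sup>L M f \<le> integral\<^sup>L M (\<lambda>x. max (f x) 0)"
    using assms by (intro integral_mono) auto
  moreover have "(\<integral>\<^sup>+x. ennreal (max (f x) 0) \<partial>M) = ennreal (integral\<^sup>L M (\<lambda>x. max (f x) 0))"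
    using assms by (intro nn_integral_eq_integral) auto
  moreover have "(\<lambda>x. ennreal (max (f x) 0)) = (\<lambda>x. ennreal (f x))"
    by (auto simp: max_def ennreal_neg)
  ultimately show ?thesis by (metis ennreal_leI)
qed

section \<open>Relative entropy as a supremum over finite partitions\<close>

definition measurable_partition :: "'a measure \<Rightarrow> nat \<Rightarrow> (nat \<Rightarrow> 'a set) \<Rightarrow> bool" where
  "measurable_partition M n A \<longleftrightarrow>
     (\<forall>i<n. A i \<in> sets M) \<and> disjoint_family_on A {..<n} \<and> (\<Union>i<n. A i) = space M"

definition partition_kl :: "'a measure \<Rightarrow> 'a measure \<Rightarrow> nat \<Rightarrow> (nat \<Rightarrow> 'a set) \<Rightarrow> real" where
  "partition_kl M N n A = (\<Sum>i<n. kl_cell (measure M (A i)) (measure N (A i)))"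

text \<open>\<open>D(M \<parallel> N) = - \<integral> log f dM\<close> for \<open>f = dN/dM\<close>; adding \<open>\<integral> (f - 1) dM = 0\<close> makes the
  integrand nonnegative.\<close>
definition relative_entropy :: "'a measure \<Rightarrow> 'a measure \<Rightarrow> ennreal" where
  "relative_entropy M N = (\<integral>\<^sup>+x. ennreal (kl_integrand (enn2real (RN_deriv M N x))) \<partial>M)"

lemma measurable_partition_add_remainder:
  assumes "\<forall>i<n. A i \<in> sets M" "disjoint_family_on A {..<n}"
  shows "measurable_partition M (Suc n) (\<lambda>i. if i < n then A i else space M - (\<Union>i<n. A i))"
  unfolding measurable_partition_def
proof (intro conjI allI impI)
  show "(if i < n then A i else space M - (\<Union>i<n. A i)) \<in> sets M" if "i < Suc n" for i
    using assms(1) by auto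
  show "disjoint_family_on (\<lambda>i. if i < n then A i else space M - (\<Union>i<n. A i)) {..<Suc n}"
    using assms(2) by (auto simp: disjoint_family_on_def)
  show "(\<Union>i<Suc n. if i < n then A i else space M - (\<Union>i<n. A i)) = space M"
    using assms(1) sets.sets_into_space by (auto simp: lessThan_Suc)
qed

lemma sets_disjointed: "(\<And>j. j \<le> i \<Longrightarrow> B j \<in> sets M) \<Longrightarrow> disjointed B i \<in> sets M"
  unfolding disjointed_def by (intro sets.Diff sets.finite_UN) auto

definition disjointed_partition :: "'a measure \<Rightarrow> nat \<Rightarrow> (nat \<Rightarrow> 'a set) \<Rightarrow> nat \<Rightarrow> 'a set" where
  "disjointed_partition M n B i = (if i < n then disjointed B i else space M - (\<Union>i<n. B i))"

lemma measurable_partition_disjointed_partition: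
  assumes "\<And>i. i < n \<Longrightarrow> B i \<in> sets M"
  shows "measurable_partition M (Suc n) (disjointed_partition M n B)"
proof -
  have eq: "disjointed_partition M n B
      = (\<lambda>i. if i < n then disjointed B i else space M - (\<Union>i<n. disjointed B i))"
    using finite_UN_disjointed_eq[of B n] by (simp add: disjointed_partition_def atLeast0LessThan fun_eq_iff)
  have "\<forall>i<n. disjointed B i \<in> sets M" using assms by (auto intro: sets_disjointed)
  moreover have "disjoint_family_on (disjointed B) {..<n}"
    using disjoint_family_disjointed by (rule disjoint_family_on_mono[rotated]) simp
  ultimately show ?thesis unfolding eq by (rule measurable_partition_add_remainder)
qed

lemma sum_measure_partition:
  assumes "measurable_partition M n A" "prob_space N" "sets N = sets M"
  shows "(\<Sum>i<n. measure N (A i)) = 1"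
proof -
  interpret N: prob_space N by fact
  have "(\<Sum>i<n. measure N (A i)) = measure N (\<Union>i<n. A i)"
    using assms by (intro N.finite_measure_finite_Union[symmetric])
      (auto simp: measurable_partition_def)
  also have "(\<Union>i<n. A i) = space N"
    using assms sets_eq_imp_space_eq[OF assms(3)] by (simp add: measurable_partition_def)
  finally show ?thesis by (simp add: N.prob_space)
qed

lemma partition_kl_eq_sum_shifted:
  assumes "measurable_partition M n A" "prob_space M" "prob_space N" "sets N = sets M"
  shows "partition_kl M N n A
       = (\<Sum>i<n. kl_cell (measure M (A i)) (measure N (A i)) + (measure N (A i) - measure M (A i)))"
  using sum_measure_partition[OF assms(1,3,4)] sum_measure_partition[OF assms(1,2) refl]
  by (simp add: partition_kl_def sum.distrib sum_subtractf)

locale equivalent_prob_measures = M: prob_space M + N: prob_space N for M N :: "'a measure" +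
  assumes sets_N: "sets N = sets M"
    and ac_M_N: "absolutely_continuous M N" and ac_N_M: "absolutely_continuous N M"
begin

definition rho :: "'a \<Rightarrow> real" where
  "rho x = enn2real (RN_deriv M N x)"

lemma relative_entropy_eq: "relative_entropy M N = (\<integral>\<^sup>+x. ennreal (kl_integrand (rho x)) \<partial>M)"
  by (simp add: relative_entropy_def rho_def)

lemma rho_measurable[measurable]: "rho \<in> borel_measurable M"
  unfolding rho_def by measurable

lemma rho_nonneg: "0 \<le> rho x"
  by (simp add: rho_def)

lemma null_sets_N: "null_sets N = null_sets M"
  using ac_M_N ac_N_M by (auto simp: absolutely_continuous_def)

lemma measure_N_eq_0_iff: "A \<in> sets M \<Longrightarrow> measure N A = 0 \<longleftrightarrow> measure M A = 0"
  using null_sets_N sets_N by (auto simp: M.emeasure_eq_measure N.emeasure_eq_measure null_sets_def)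

lemma integral_N:
  "h \<in> borel_measurable M \<Longrightarrow> integrable N h \<longleftrightarrow> integrable M (\<lambda>x. rho x * h x)"
  "h \<in> borel_measurable M \<Longrightarrow> integral\<^sup>L N h = (\<integral>x. rho x * h x \<partial>M)"
  unfolding rho_def using N.sigma_finite_measure
  by (simp_all add: M.RN_deriv_integrable[OF _ ac_M_N sets_N] M.RN_deriv_integral[OF _ ac_M_N sets_N])

lemma integral_affine_rho_indicator:
  assumes "A \<in> sets M"
  shows "integrable M (\<lambda>x. (c + k * rho x) * indicator A x)"
    and "(\<integral>x. (c + k * rho x) * indicator A x \<partial>M) = c * measure M A + k * measure N A"
proof -
  have "integrable N (indicator A :: _ \<Rightarrow> real)"
    using assms sets_N by (auto simp: N.emeasure_eq_measure)
  then have rho_A: "integrable M (\<lambda>x. rho x * indicator A x)"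
    using assms integral_N(1)[of "indicator A"] by simp
  have "(\<lambda>x. (c + k * rho x) * indicator A x) = (\<lambda>x. c * indicator A x + k * (rho x * indicator A x))"
    by (auto simp: algebra_simps)
  moreover have "measure N A = (\<integral>x. rho x * indicator A x \<partial>M)"
    using assms integral_N(2)[of "indicator A"] sets_N by simp
  ultimately show "integrable M (\<lambda>x. (c + k * rho x) * indicator A x)"
    and "(\<integral>x. (c + k * rho x) * indicator A x \<partial>M) = c * measure M A + k * measure N A"
    using assms rho_A by (simp_all add: M.emeasure_eq_measure)
qed

lemma AE_rho_pos: "AE x in M. 0 < rho x"
proof -
  let ?Z = "{x\<in>space M. rho x = 0}"
  have Z: "?Z \<in> sets M" by measurable
  have "measure N ?Z = (\<integral>x. (0 + 1 * rho x) * indicator ?Z x \<partial>M)"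
    using integral_affine_rho_indicator(2)[OF Z, of 0 1] by simp
  also have "\<dots> = 0" by (intro integral_eq_zero_AE) (auto split: split_indicator)
  finally have "?Z \<in> null_sets M"
    using Z measure_N_eq_0_iff[OF Z] by (simp add: M.emeasure_eq_measure null_sets_def)
  then have "AE x in M. x \<notin> ?Z" by (rule AE_not_in)
  then show ?thesis using rho_nonneg by (auto simp: less_le)
qed

lemma nn_integral_rho: "(\<integral>\<^sup>+x. ennreal (rho x) \<partial>M) = 1"
proof -
  have "(\<integral>\<^sup>+x. ennreal (rho x) \<partial>M) = (\<integral>\<^sup>+x. ennreal ((0 + 1 * rho x) * indicator (space M) x) \<partial>M)"
    by (intro nn_integral_cong) auto
  also have "\<dots> = ennreal (measure N (space M))"
    using integral_affine_rho_indicator[OF sets.top, of 0 1] rho_nonneg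
    by (subst nn_integral_eq_integral) auto
  finally show ?thesis using sets_eq_imp_space_eq[OF sets_N] N.prob_space by simp
qed

lemma kl_cell_shifted_nonneg:
  "A \<in> sets M \<Longrightarrow> 0 \<le> kl_cell (measure M A) (measure N A) + (measure N A - measure M A)"
  using kl_cell_ge_diff[of "measure M A" "measure N A"] measure_N_eq_0_iff[of A] by (simp add: less_le)

lemma kl_cell_le_nn_integral:
  assumes A: "A \<in> sets M"
  shows "ennreal (kl_cell (measure M A) (measure N A) + (measure N A - measure M A))
       \<le> (\<integral>\<^sup>+x. ennreal (kl_integrand (rho x)) * indicator A x \<partial>M)"
proof (cases "measure M A = 0")
  case True
  then show ?thesis using measure_N_eq_0_iff[OF A] by (simp add: kl_cell_def)
next
  case False
  define p q where "p = measure M A" and "q = measure N A"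
  have "0 < p" "0 < q"
    using False measure_N_eq_0_iff[OF A] by (auto simp: p_def q_def less_le)
  define t where "t = q / p"
  have "0 < t" using \<open>0 < p\<close> \<open>0 < q\<close> by (simp add: t_def)
  \<comment> \<open>Integrate the tangent line \<open>c + k y\<close> of \<open>kl_integrand\<close> at \<open>t\<close>, which lies below it.\<close>
  define c k where "c = kl_integrand t - (1 - 1 / t) * t" and "k = 1 - 1 / t"
  have "(\<integral>x. (c + k * rho x) * indicator A x \<partial>M) = c * p + k * q"
    using integral_affine_rho_indicator(2)[OF A] by (simp add: p_def q_def)
  also have "\<dots> = kl_cell p q + (q - p)"
    using \<open>0 < p\<close> \<open>0 < q\<close> by (simp add: c_def k_def t_def kl_integrand_def kl_cell_def field_simps)
  finally have "ennreal (kl_cell p q + (q - p)) \<le> (\<integral>\<^sup>+x. ennreal ((c + k * rho x) * indicator A x) \<partial>M)"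
    using ennreal_integral_le_nn_integral[OF integral_affine_rho_indicator(1)[OF A, of c k]] by simp
  also have "\<dots> \<le> (\<integral>\<^sup>+x. ennreal (kl_integrand (rho x)) * indicator A x \<partial>M)"
    using AE_rho_pos
  proof (intro nn_integral_mono_AE, eventually_elim)
    case (elim x)
    then have "c + k * rho x \<le> kl_integrand (rho x)"
      using kl_integrand_ge_tangent[of "rho x" t] \<open>0 < t\<close> by (simp add: c_def k_def algebra_simps)
    then show ?case by (auto intro: ennreal_leI split: split_indicator)
  qed
  finally show ?thesis by (simp add: p_def q_def)
qed

lemma partition_kl_le_relative_entropy:
  assumes "measurable_partition M n A"
  shows "ennreal (partition_kl M N n A) \<le> relative_entropy M N"
proof -
  have A: "A i \<in> sets M" if "i < n" for i
    using assms that by (simp add: measurable_partition_def)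
  have "ennreal (partition_kl M N n A)
      = (\<Sum>i<n. ennreal (kl_cell (measure M (A i)) (measure N (A i)) + (measure N (A i) - measure M (A i))))"
    unfolding partition_kl_eq_sum_shifted[OF assms M.prob_space_axioms N.prob_space_axioms sets_N]
    using A kl_cell_shifted_nonneg by (intro sum_ennreal[symmetric]) auto
  also have "\<dots> \<le> (\<Sum>i<n. \<integral>\<^sup>+x. ennreal (kl_integrand (rho x)) * indicator (A i) x \<partial>M)"
    using A by (intro sum_mono kl_cell_le_nn_integral) auto
  also have "\<dots> = (\<integral>\<^sup>+x. (\<Sum>i<n. ennreal (kl_integrand (rho x)) * indicator (A i) x) \<partial>M)"
    using A by (intro nn_integral_sum[symmetric]) (auto simp: kl_integrand_def)
  also have "\<dots> = relative_entropy M N"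
    unfolding relative_entropy_eq
  proof (intro nn_integral_cong)
    fix x assume "x \<in> space M"
    then have "(\<Sum>i<n. indicator (A i) x) = (1 :: ennreal)"
      using assms indicator_UN_disjoint[of "{..<n}" A x]
      by (simp add: measurable_partition_def)
    then show "(\<Sum>i<n. ennreal (kl_integrand (rho x)) * indicator (A i) x) = ennreal (kl_integrand (rho x))"
      by (simp add: sum_distrib_left[symmetric])
  qed
  finally show ?thesis .
qed

lemma kl_cell_ge_of_rho_le:
  assumes A: "A \<in> sets M" and bound: "\<And>x. x \<in> A \<Longrightarrow> rho x \<le> exp c"
  shows "- (measure M A * c) \<le> kl_cell (measure M A) (measure N A)"
proof (cases "measure M A = 0")
  case True
  then show ?thesis by (simp add: kl_cell_def)
next
  case False
  define p q where "p = measure M A" and "q = measure N A"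
  have "0 < p" "0 < q" using False measure_N_eq_0_iff[OF A] by (auto simp: p_def q_def less_le)
  have "q = (\<integral>x. (0 + 1 * rho x) * indicator A x \<partial>M)"
    using integral_affine_rho_indicator(2)[OF A, of 0 1] by (simp add: q_def)
  also have "\<dots> \<le> (\<integral>x. (exp c + 0 * rho x) * indicator A x \<partial>M)"
    using bound integral_affine_rho_indicator(1)[OF A, of 0 1]
      integral_affine_rho_indicator(1)[OF A, of "exp c" 0]
    by (intro integral_mono) (auto split: split_indicator)
  also have "\<dots> = exp c * p"
    using integral_affine_rho_indicator(2)[OF A, of "exp c" 0] by (simp add: p_def)
  finally have "q / p \<le> exp c" using \<open>0 < p\<close> by (simp add: pos_divide_le_eq mult.commute)
  then have "ln (q / p) \<le> c"
    using \<open>0 < p\<close> \<open>0 < q\<close> by (metis divide_pos_pos exp_gt_zero ln_exp ln_le_cancel_iff)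
  then show ?thesis
    using \<open>0 < p\<close> mult_left_mono[of "ln (q / p)" c p] by (simp add: kl_cell_def p_def q_def)
qed

lemma nn_integral_level_set_le:
  assumes A: "A \<in> sets M" and lev: "\<And>x. x \<in> A \<Longrightarrow> 0 < rho x \<and> s \<le> ln (rho x) \<and> ln (rho x) < s + d"
  shows "(\<integral>\<^sup>+x. ennreal (kl_integrand (rho x)) * indicator A x \<partial>M)
       \<le> ennreal (kl_cell (measure M A) (measure N A) + (measure N A - measure M A) + d * measure M A)"
proof -
  define p q where "p = measure M A" and "q = measure N A"
  have "(\<integral>\<^sup>+x. ennreal (kl_integrand (rho x)) * indicator A x \<partial>M)
      \<le> (\<integral>\<^sup>+x. ennreal ((- (1 + s) + 1 * rho x) * indicator A x) \<partial>M)"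
    using lev by (intro nn_integral_mono) (auto simp: kl_integrand_def split: split_indicator intro!: ennreal_leI)
  also have "\<dots> = ennreal (\<integral>x. (- (1 + s) + 1 * rho x) * indicator A x \<partial>M)"
  proof -
    have "0 \<le> - (1 + s) + rho x" if "x \<in> A" for x
      using lev[OF that] ln_le_minus_one[of "rho x"] by linarith
    then show ?thesis
      using integral_affine_rho_indicator(1)[OF A, of "- (1 + s)" 1]
      by (intro nn_integral_eq_integral) (auto split: split_indicator)
  qed
  also have "\<dots> = ennreal (- (1 + s) * p + q)"
    using integral_affine_rho_indicator(2)[OF A, of "- (1 + s)" 1] by (simp add: p_def q_def)
  also have "\<dots> \<le> ennreal (kl_cell p q + (q - p) + d * p)"
  proof (intro ennreal_leI)
    have "rho x \<le> exp (s + d)" if "x \<in> A" for x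
      using lev[OF that] by (metis exp_ln exp_less_mono less_imp_le)
    then have "- (p * (s + d)) \<le> kl_cell p q"
      unfolding p_def q_def by (rule kl_cell_ge_of_rho_le[OF A])
    then show "- (1 + s) * p + q \<le> kl_cell p q + (q - p) + d * p" by (simp add: algebra_simps)
  qed
  finally show ?thesis by (simp add: p_def q_def)
qed

text \<open>For \<open>i < 2 n\<close> these cells are the sets \<open>d (i - n) \<le> ln \<rho> < d (i - n + 1)\<close>; together they cover
  \<open>-n d \<le> ln \<rho> < n d\<close>.\<close>
definition level_cell :: "real \<Rightarrow> nat \<Rightarrow> nat \<Rightarrow> 'a set" where
  "level_cell d n i = {x \<in> space M. 0 < rho x \<and> \<lfloor>ln (rho x) / d\<rfloor> = int i - int n}"

lemma level_cell_sets[measurable]: "level_cell d n i \<in> sets M"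
  unfolding level_cell_def by measurable

lemma disjoint_family_level_cell: "disjoint_family (level_cell d n)"
  by (auto simp: disjoint_family_on_def level_cell_def)

lemma level_cell_bounds:
  assumes "0 < d" "x \<in> level_cell d n i"
  shows "0 < rho x \<and> d * (int i - int n) \<le> ln (rho x) \<and> ln (rho x) < d * (int i - int n) + d"
proof -
  have "0 < rho x" and fl: "\<lfloor>ln (rho x) / d\<rfloor> = int i - int n"
    using assms(2) by (auto simp: level_cell_def)
  have "real_of_int (int i - int n) \<le> ln (rho x) / d" "ln (rho x) / d < real_of_int (int i - int n) + 1"
    unfolding fl[symmetric] by linarith+
  then show ?thesis using \<open>0 < rho x\<close> assms(1) by (simp add: field_simps)
qed

lemma relative_entropy_eq_SUP_level_cells:
  assumes "0 < d"
  shows "relative_entropy M N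
       = (SUP n. \<integral>\<^sup>+x. ennreal (kl_integrand (rho x)) * indicator (\<Union>i<2*n. level_cell d n i) x \<partial>M)"
proof -
  let ?U = "\<lambda>n. \<Union>i<2*n. level_cell d n i"
  have "?U n \<subseteq> ?U (Suc n)" for n
  proof
    fix x assume "x \<in> ?U n"
    then obtain i where "i < 2 * n" "x \<in> level_cell d n i" by auto
    then have "Suc i < 2 * Suc n" "x \<in> level_cell d (Suc n) (Suc i)" by (auto simp: level_cell_def)
    then show "x \<in> ?U (Suc n)" by blast
  qed
  then have inc: "incseq (\<lambda>n x. ennreal (kl_integrand (rho x)) * indicator (?U n) x)"
    by (intro incseq_SucI le_funI) (auto split: split_indicator)
  have cover: "\<exists>n. x \<in> ?U n" if "x \<in> space M" "0 < rho x" for x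
  proof -
    define k where "k = \<lfloor>ln (rho x) / d\<rfloor>"
    define n where "n = nat (\<bar>k\<bar> + 1)"
    have "x \<in> level_cell d n (nat (k + int n))" "nat (k + int n) < 2 * n"
      using that by (auto simp: level_cell_def k_def n_def)
    then show ?thesis by blast
  qed
  have "relative_entropy M N
      = (\<integral>\<^sup>+x. (SUP n. ennreal (kl_integrand (rho x)) * indicator (?U n) x) \<partial>M)"
    unfolding relative_entropy_eq
  proof (intro nn_integral_cong_AE)
    show "AE x in M. ennreal (kl_integrand (rho x)) = (SUP n. ennreal (kl_integrand (rho x)) * indicator (?U n) x)"
      using AE_rho_pos AE_space
    proof eventually_elim
      case (elim x)
      then obtain n where "x \<in> ?U n" using cover by blast
      then show ?case
        by (intro antisym SUP_upper2[of n] SUP_least) (auto split: split_indicator)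
    qed
  qed
  also have "\<dots> = (SUP n. \<integral>\<^sup>+x. ennreal (kl_integrand (rho x)) * indicator (?U n) x \<partial>M)"
    using inc by (intro nn_integral_monotone_convergence_SUP) (auto simp: kl_integrand_def)
  finally show ?thesis .
qed

lemma nn_integral_level_cells_le:
  fixes d :: real and n :: nat
  assumes "0 < d"
  defines "U \<equiv> \<Union>i<2*n. level_cell d n i"
  shows "(\<integral>\<^sup>+x. ennreal (kl_integrand (rho x)) * indicator U x \<partial>M)
       \<le> ennreal (partition_kl M N (Suc (2*n)) (\<lambda>i. if i < 2*n then level_cell d n i else space M - U) + d)"
proof -
  let ?T = "\<lambda>A. kl_cell (measure M A) (measure N A) + (measure N A - measure M A)"
  have disj: "disjoint_family_on (level_cell d n) {..<2*n}"
    using disjoint_family_level_cell by (rule disjoint_family_on_mono[rotated]) simp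
  have "(\<integral>\<^sup>+x. ennreal (kl_integrand (rho x)) * indicator U x \<partial>M)
      = (\<integral>\<^sup>+x. (\<Sum>i<2*n. ennreal (kl_integrand (rho x)) * indicator (level_cell d n i) x) \<partial>M)"
    unfolding U_def by (simp add: sum_distrib_left[symmetric] indicator_UN_disjoint[OF _ disj])
  also have "\<dots> = (\<Sum>i<2*n. \<integral>\<^sup>+x. ennreal (kl_integrand (rho x)) * indicator (level_cell d n i) x \<partial>M)"
    by (intro nn_integral_sum) (auto simp: kl_integrand_def)
  also have "\<dots> \<le> (\<Sum>i<2*n. ennreal (?T (level_cell d n i) + d * measure M (level_cell d n i)))"
    using level_cell_bounds[OF assms(1)] by (intro sum_mono nn_integral_level_set_le) auto
  also have "\<dots> = ennreal (\<Sum>i<2*n. ?T (level_cell d n i) + d * measure M (level_cell d n i))"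
    using kl_cell_shifted_nonneg assms(1) by (intro sum_ennreal) (auto intro!: add_nonneg_nonneg)
  also have "(\<Sum>i<2*n. ?T (level_cell d n i) + d * measure M (level_cell d n i))
      = (\<Sum>i<2*n. ?T (level_cell d n i)) + d * measure M U"
    unfolding U_def using M.finite_measure_finite_Union[OF _ _ disj]
    by (simp add: sum.distrib sum_distrib_left[symmetric] image_subset_iff)
  also have "\<dots> \<le> (\<Sum>i<Suc (2*n). ?T (if i < 2*n then level_cell d n i else space M - U)) + d"
  proof -
    have "d * measure M U \<le> d" using assms(1) M.prob_le_1 by (simp add: mult_left_le)
    moreover have "0 \<le> ?T (space M - U)" unfolding U_def by (intro kl_cell_shifted_nonneg) measurable
    ultimately show ?thesis by simp
  qed
  also have "\<dots> = partition_kl M N (Suc (2*n)) (\<lambda>i. if i < 2*n then level_cell d n i else space M - U) + d"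
    unfolding U_def
    by (subst partition_kl_eq_sum_shifted[OF measurable_partition_add_remainder])
      (auto simp: disj M.prob_space_axioms N.prob_space_axioms sets_N intro!: sum.cong)
  finally show ?thesis by (simp add: ennreal_leI)
qed

lemma exists_partition_kl_gt:
  assumes "0 \<le> c" "ennreal c < relative_entropy M N"
  shows "\<exists>n A. measurable_partition M n A \<and> c < partition_kl M N n A"
proof -
  obtain z where z: "ennreal c < z" "z < relative_entropy M N"
    using dense[OF assms(2)] by blast
  then obtain r where r: "z = ennreal r" "0 \<le> r" by (cases z) auto
  define d where "d = r - c"
  have "0 < d" using z r assms(1) by (simp add: d_def ennreal_less_iff)
  let ?U = "\<lambda>n. \<Union>i<2*n. level_cell d n i"
  obtain n where "ennreal r < (\<integral>\<^sup>+x. ennreal (kl_integrand (rho x)) * indicator (?U n) x \<partial>M)"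
    using z r relative_entropy_eq_SUP_level_cells[OF \<open>0 < d\<close>] by (auto simp: less_SUP_iff)
  also note nn_integral_level_cells_le[OF \<open>0 < d\<close>, of n]
  finally have "c < partition_kl M N (Suc (2*n)) (\<lambda>i. if i < 2*n then level_cell d n i else space M - ?U n)"
    using r(2) by (simp add: d_def ennreal_less_iff)
  moreover have "measurable_partition M (Suc (2*n)) (\<lambda>i. if i < 2*n then level_cell d n i else space M - ?U n)"
    using disjoint_family_level_cell
    by (intro measurable_partition_add_remainder) (auto intro: disjoint_family_on_mono)
  ultimately show ?thesis by blast
qed

lemma nn_integral_neg_ln_rho:
  "(\<integral>\<^sup>+x. ennreal (- ln (rho x)) \<partial>M) = relative_entropy M N + (\<integral>\<^sup>+x. ennreal (ln (rho x)) \<partial>M)"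
proof -
  have "1 + (relative_entropy M N + (\<integral>\<^sup>+x. ennreal (ln (rho x)) \<partial>M))
      = (\<integral>\<^sup>+x. ennreal (kl_integrand (rho x)) + 1 + ennreal (ln (rho x)) \<partial>M)"
    unfolding relative_entropy_eq
    by (subst nn_integral_add; simp add: kl_integrand_def)+ (simp add: M.emeasure_space_1 ac_simps)
  also have "\<dots> = (\<integral>\<^sup>+x. ennreal (rho x) + ennreal (- ln (rho x)) \<partial>M)"
    using AE_rho_pos by (intro nn_integral_cong_AE) (auto elim!: eventually_mono simp: ennreal_kl_integrand_eq)
  also have "\<dots> = 1 + (\<integral>\<^sup>+x. ennreal (- ln (rho x)) \<partial>M)"
    by (subst nn_integral_add) (auto simp: nn_integral_rho)
  finally show ?thesis by (simp add: ennreal_add_left_cancel)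
qed

lemma nn_integral_ln_rho_le_1: "(\<integral>\<^sup>+x. ennreal (ln (rho x)) \<partial>M) \<le> 1"
proof -
  have "ln (rho x) \<le> rho x" for x
    using ln_le_minus_one[of "rho x"] rho_nonneg[of x] by (cases "rho x = 0") auto
  then have "(\<integral>\<^sup>+x. ennreal (ln (rho x)) \<partial>M) \<le> (\<integral>\<^sup>+x. ennreal (rho x) \<partial>M)"
    by (intro nn_integral_mono ennreal_leI)
  then show ?thesis by (simp add: nn_integral_rho)
qed

end

lemma relative_entropy_le_by_partitions:
  assumes "equivalent_prob_measures M N" "equivalent_prob_measures M N'"
    and approx: "\<And>n A e. measurable_partition M n A \<Longrightarrow> 0 < e \<Longrightarrow>
      \<exists>n' A'. measurable_partition M n' A' \<and> partition_kl M N n A - e \<le> partition_kl M N' n' A'"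
  shows "relative_entropy M N \<le> relative_entropy M N'"
proof (rule dense_le)
  fix y assume y: "y < relative_entropy M N"
  then obtain c where c: "y = ennreal c" "0 \<le> c" by (cases y) (auto simp: top_unique)
  obtain n A where A: "measurable_partition M n A" and "c < partition_kl M N n A"
    using equivalent_prob_measures.exists_partition_kl_gt[OF assms(1) c(2)] y c(1) by blast
  then obtain n' A' where A': "measurable_partition M n' A'" and "c \<le> partition_kl M N' n' A'"
    using approx[OF A, of "partition_kl M N n A - c"] by auto
  have "ennreal c \<le> ennreal (partition_kl M N' n' A')" using \<open>c \<le> _\<close> by (rule ennreal_leI)
  also have "\<dots> \<le> relative_entropy M N'"
    by (rule equivalent_prob_measures.partition_kl_le_relative_entropy[OF assms(2) A'])
  finally show "y \<le> relative_entropy M N'" using c by simp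
qed

section \<open>Nonsingular actions and Furstenberg entropy\<close>

locale nonsingular_prob_action = M: prob_space M for M :: "'x measure" and a :: "'g::group_add \<Rightarrow> 'x \<Rightarrow> 'x" +
  assumes nonsingular: "nonsingular_action M a" and space_eq_UNIV: "space M = UNIV"
begin

lemma measurable_act: "a g \<in> measurable M M"
  and act_zero: "a 0 = id"
  and act_add: "a (g + h) = a g \<circ> a h"
  and absolutely_continuous_act: "absolutely_continuous M (act_measure M a g)"
  using nonsingular by (auto simp: nonsingular_action_def)

lemma image_eq_vimage: "a g ` A = a (- g) -` A"
proof -
  have "a g (a (- g) x) = x" "a (- g) (a g x) = x" for x
    using act_add[of g "- g"] act_add[of "- g" g] act_zero by (auto dest: fun_cong[where x = x])
  then show ?thesis by (auto intro: image_eqI[where x = "a (- g) _"])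
qed

lemma sets_image: "A \<in> sets M \<Longrightarrow> a g ` A \<in> sets M"
  unfolding image_eq_vimage using measurable_sets[OF measurable_act[of "- g"]] space_eq_UNIV by auto

lemma emeasure_act_measure: "A \<in> sets M \<Longrightarrow> emeasure (act_measure M a g) A = emeasure M (a g ` A)"
  and measure_act_measure: "A \<in> sets M \<Longrightarrow> measure (act_measure M a g) A = measure M (a g ` A)"
  unfolding act_measure_def using measurable_act[of "- g"] space_eq_UNIV
  by (simp_all add: emeasure_distr measure_distr image_eq_vimage)

lemma equivalent_prob_measures_act: "equivalent_prob_measures M (act_measure M a g)"
proof (intro equivalent_prob_measures.intro equivalent_prob_measures_axioms.intro)
  show "prob_space M" by (rule M.prob_space_axioms)
  show "prob_space (act_measure M a g)"
    unfolding act_measure_def using measurable_act by (intro M.prob_space_distr) auto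
  show "sets (act_measure M a g) = sets M" by (simp add: act_measure_def)
  show "absolutely_continuous M (act_measure M a g)" by (rule absolutely_continuous_act)
  show "absolutely_continuous (act_measure M a g) M"
    unfolding absolutely_continuous_def
  proof
    fix A assume "A \<in> null_sets (act_measure M a g)"
    then have "A \<in> sets M" "emeasure (act_measure M a g) A = 0"
      by (auto simp: act_measure_def null_sets_def)
    then have "a g ` A \<in> null_sets M"
      using sets_image[of A g] emeasure_act_measure[of A g] by auto
    then have "a g ` A \<in> null_sets (act_measure M a (- g))"
      using absolutely_continuous_act[of "- g"] by (auto simp: absolutely_continuous_def)
    then have "emeasure M (a (- g) ` a g ` A) = 0"
      using emeasure_act_measure[of "a g ` A" "- g"] sets_image[OF \<open>A \<in> sets M\<close>] by auto
    moreover have "a (- g) ` a g ` A = A" by (simp add: image_eq_vimage vimage_comp[symmetric] act_add[symmetric] act_zero)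
    ultimately show "A \<in> null_sets M" using \<open>A \<in> sets M\<close> by auto
  qed
qed

lemma measure_image_eq_0_iff: "A \<in> sets M \<Longrightarrow> measure M (a g ` A) = 0 \<longleftrightarrow> measure M A = 0"
  using equivalent_prob_measures.measure_N_eq_0_iff[OF equivalent_prob_measures_act, of A g]
  by (simp add: measure_act_measure)

end

lemma furstenberg_entropy_eq_relative_entropy:
  assumes "\<And>g. equivalent_prob_measures M (act_measure M a g)"
  shows "furstenberg_entropy m M a = enn2ereal (\<integral>\<^sup>+g. relative_entropy M (act_measure M a g) \<partial>measure_pmf m)"
proof -
  define P where "P g = (\<integral>\<^sup>+x. ennreal (ln (enn2real (RN_deriv M (act_measure M a g) x))) \<partial>M)" for g
  have neg_ln: "(\<integral>\<^sup>+x. ennreal (- ln (enn2real (RN_deriv M (act_measure M a g) x))) \<partial>M)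
      = relative_entropy M (act_measure M a g) + P g" for g
    using equivalent_prob_measures.nn_integral_neg_ln_rho[OF assms]
    by (simp add: P_def equivalent_prob_measures.rho_def[OF assms])
  have "(\<integral>\<^sup>+g. P g \<partial>measure_pmf m) \<le> (\<integral>\<^sup>+g. 1 \<partial>measure_pmf m)"
    using equivalent_prob_measures.nn_integral_ln_rho_le_1[OF assms]
    by (intro nn_integral_mono) (simp add: P_def equivalent_prob_measures.rho_def[OF assms])
  then have "(\<integral>\<^sup>+g. P g \<partial>measure_pmf m) \<noteq> \<top>"
    by (auto simp: measure_pmf.emeasure_space_1 top_unique)
  then show ?thesis
    unfolding furstenberg_entropy_def Let_def P_def[symmetric] neg_ln
    by (simp add: nn_integral_add enn2ereal_add_minus_cancel)
qed

section \<open>Weak containment\<close>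

context prob_space
begin

lemma measure_disjointed_ge:
  assumes B: "\<And>j. j \<le> i \<Longrightarrow> B j \<in> events"
  shows "measure M (B i) - (\<Sum>j<i. measure M (B i \<inter> B j)) \<le> measure M (disjointed B i)"
proof -
  have "B i \<subseteq> disjointed B i \<union> (\<Union>j<i. B i \<inter> B j)" by (auto simp: disjointed_def)
  then have "measure M (B i) \<le> measure M (disjointed B i \<union> (\<Union>j<i. B i \<inter> B j))"
    using B sets_disjointed[OF B] by (intro finite_measure_mono) auto
  also have "\<dots> \<le> measure M (disjointed B i) + measure M (\<Union>j<i. B i \<inter> B j)"
    using B sets_disjointed[OF B] by (intro measure_subadditive) auto
  also have "measure M (\<Union>j<i. B i \<inter> B j) \<le> (\<Sum>j<i. measure M (B i \<inter> B j))"
    using B by (intro finite_measure_subadditive_finite) auto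
  finally show ?thesis by simp
qed

lemma almost_partition_disjointed_estimates:
  fixes \<eta> :: real
  assumes A: "measurable_partition M n A" and B: "\<And>i. i < n \<Longrightarrow> B i \<in> events"
    and close: "\<And>i j. i < n \<Longrightarrow> j < n \<Longrightarrow> \<bar>measure M (A i \<inter> A j) - measure M (B i \<inter> B j)\<bar> < \<eta>"
  shows "\<And>i. i < n \<Longrightarrow> \<bar>measure M (disjointed B i) - measure M (A i)\<bar> \<le> n * \<eta>"
    and "measure M (space M - (\<Union>i<n. B i)) \<le> real n ^ 2 * \<eta>"
proof -
  have diag: "\<bar>measure M (A i) - measure M (B i)\<bar> < \<eta>" if "i < n" for i
    using close[OF that that] by simp
  have off_diag: "measure M (B i \<inter> B j) < \<eta>" if "i < n" "j < n" "i \<noteq> j" for i j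
    using close[OF that(1,2)] A that by (simp add: measurable_partition_def disjoint_family_on_def)
  show cell: "\<bar>measure M (disjointed B i) - measure M (A i)\<bar> \<le> n * \<eta>" if "i < n" for i
  proof -
    have "(\<Sum>j<i. measure M (B i \<inter> B j)) \<le> (\<Sum>j<i. \<eta>)"
      using off_diag \<open>i < n\<close> by (intro sum_mono less_imp_le) auto
    moreover have "real (Suc i) * \<eta> \<le> n * \<eta>"
      using diag[OF that] \<open>i < n\<close> by (intro mult_right_mono) auto
    ultimately have "measure M (A i) - n * \<eta> \<le> measure M (disjointed B i)"
      using measure_disjointed_ge[of i B] B diag[OF that] \<open>i < n\<close> by (auto simp: algebra_simps)
    moreover have "measure M (disjointed B i) \<le> measure M (B i)"
      using B that by (intro finite_measure_mono disjointed_subset) auto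
    moreover have "\<eta> \<le> n * \<eta>"
      using diag[OF that] \<open>i < n\<close> mult_right_mono[of 1 "real n" \<eta>] by simp
    ultimately show ?thesis using diag[OF that] by (simp add: abs_le_iff)
  qed
  have "measurable_partition M (Suc n) (disjointed_partition M n B)"
    using B by (rule measurable_partition_disjointed_partition)
  from sum_measure_partition[OF this prob_space_axioms refl]
  have "(\<Sum>i<n. measure M (disjointed B i)) + measure M (space M - (\<Union>i<n. B i)) = 1"
    by (simp add: disjointed_partition_def)
  moreover have "(\<Sum>i<n. measure M (A i) - n * \<eta>) \<le> (\<Sum>i<n. measure M (disjointed B i))"
    using cell by (intro sum_mono) (fastforce simp: abs_le_iff)
  ultimately show "measure M (space M - (\<Union>i<n. B i)) \<le> real n ^ 2 * \<eta>"
    using sum_measure_partition[OF A prob_space_axioms refl]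
    by (simp add: sum_subtractf power2_eq_square algebra_simps)
qed

lemma measure_le_by_cells:
  fixes \<eta> :: real
  assumes A: "measurable_partition M n A" and B: "\<And>i. i < n \<Longrightarrow> B i \<in> events"
    and "E \<in> events" "F \<in> events"
    and close: "\<And>j. j < n \<Longrightarrow> \<bar>measure M (E \<inter> A j) - measure M (F \<inter> B j)\<bar> < \<eta>"
  shows "measure M F \<le> measure M E + n * \<eta> + measure M (space M - (\<Union>i<n. B i))"
proof -
  have "(\<Union>j<n. E \<inter> A j) = E"
    using A sets.sets_into_space[OF \<open>E \<in> events\<close>] by (auto simp: measurable_partition_def)
  moreover have "(\<Sum>j<n. measure M (E \<inter> A j)) = measure M (\<Union>j<n. E \<inter> A j)"
    using A \<open>E \<in> events\<close> unfolding measurable_partition_def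
    by (intro finite_measure_finite_Union[symmetric]) (auto simp: disjoint_family_on_def)
  ultimately have sum_E: "(\<Sum>j<n. measure M (E \<inter> A j)) = measure M E" by simp
  have "F \<subseteq> (\<Union>j<n. F \<inter> B j) \<union> (space M - (\<Union>i<n. B i))"
    using sets.sets_into_space[OF \<open>F \<in> events\<close>] by auto
  then have "measure M F \<le> measure M ((\<Union>j<n. F \<inter> B j) \<union> (space M - (\<Union>i<n. B i)))"
    using B \<open>F \<in> events\<close> by (intro finite_measure_mono) auto
  also have "\<dots> \<le> measure M (\<Union>j<n. F \<inter> B j) + measure M (space M - (\<Union>i<n. B i))"
    using B \<open>F \<in> events\<close> by (intro measure_subadditive) auto
  also have "measure M (\<Union>j<n. F \<inter> B j) \<le> (\<Sum>j<n. measure M (F \<inter> B j))"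
    using B \<open>F \<in> events\<close> by (intro finite_measure_subadditive_finite) auto
  also have "\<dots> \<le> (\<Sum>j<n. measure M (E \<inter> A j) + \<eta>)"
  proof (intro sum_mono)
    fix j assume "j \<in> {..<n}"
    then show "measure M (F \<inter> B j) \<le> measure M (E \<inter> A j) + \<eta>"
      using close[of j] by (simp add: abs_less_iff)
  qed
  finally show ?thesis by (simp add: sum.distrib sum_E)
qed

end

lemma weakly_containedE:
  fixes n :: nat
  assumes "weakly_contained M a b" "0 < \<eta>" "finite F" "\<And>i. i < n \<Longrightarrow> A i \<in> sets M"
  obtains B where "\<And>i. i < n \<Longrightarrow> B i \<in> sets M"
    and "\<And>h i j. h \<in> F \<Longrightarrow> i < n \<Longrightarrow> j < n \<Longrightarrow>
           \<bar>measure M (a h ` A i \<inter> A j) - measure M (b h ` B i \<inter> B j)\<bar> < \<eta>"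
proof -
  have "set (map A [0..<n]) \<subseteq> sets M" using assms(4) by auto
  then obtain Bs where "length Bs = length (map A [0..<n])" "set Bs \<subseteq> sets M"
    and close: "\<forall>h\<in>F. \<forall>i<length (map A [0..<n]). \<forall>j<length (map A [0..<n]).
      \<bar>measure M (a h ` (map A [0..<n] ! i) \<inter> map A [0..<n] ! j) - measure M (b h ` (Bs ! i) \<inter> Bs ! j)\<bar> < \<eta>"
    using assms(1)[unfolded weakly_contained_def, rule_format, OF assms(2,3)] by blast
  then show ?thesis by (intro that[of "(!) Bs"]) (auto simp: nth_map)
qed

lemma weak_containment_cell_estimates:
  fixes n :: nat and \<eta> :: real
  assumes "nonsingular_prob_action M a" "nonsingular_prob_action M b"
    and A: "measurable_partition M n A" and B: "\<And>i. i < n \<Longrightarrow> B i \<in> sets M"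
    and close: "\<And>h i j. h \<in> {0, g} \<Longrightarrow> i < n \<Longrightarrow> j < n \<Longrightarrow>
           \<bar>measure M (a h ` A i \<inter> A j) - measure M (b h ` B i \<inter> B j)\<bar> < \<eta>"
  shows "\<And>i. i < n \<Longrightarrow> \<bar>measure M (disjointed B i) - measure M (A i)\<bar> \<le> n * \<eta>"
    and "\<And>i. i < n \<Longrightarrow> measure M (b g ` disjointed B i) \<le> measure M (a g ` A i) + n * \<eta> + real n ^ 2 * \<eta>"
    and "measure M (space M - (\<Union>i<n. B i)) \<le> real n ^ 2 * \<eta>"
proof -
  interpret a: nonsingular_prob_action M a by fact
  interpret b: nonsingular_prob_action M b by fact
  have A_sets: "A i \<in> sets M" if "i < n" for i using A that by (simp add: measurable_partition_def)
  \<comment> \<open>The identity element \<open>0 \<in> {0, g}\<close> controls the overlaps \<open>B i \<inter> B j\<close>.\<close>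
  have close_0: "\<bar>measure M (A i \<inter> A j) - measure M (B i \<inter> B j)\<bar> < \<eta>" if "i < n" "j < n" for i j
    using close[of 0 i j] that a.act_zero b.act_zero by simp
  show "\<bar>measure M (disjointed B i) - measure M (A i)\<bar> \<le> n * \<eta>" if "i < n" for i
    using a.M.almost_partition_disjointed_estimates(1)[OF A B close_0 that] by simp
  show R: "measure M (space M - (\<Union>i<n. B i)) \<le> real n ^ 2 * \<eta>"
    using a.M.almost_partition_disjointed_estimates(2)[OF A B close_0] by simp
  show "measure M (b g ` disjointed B i) \<le> measure M (a g ` A i) + n * \<eta> + real n ^ 2 * \<eta>"
    if "i < n" for i
  proof -
    have "measure M (b g ` disjointed B i) \<le> measure M (b g ` B i)"
      using b.sets_image B that by (intro a.M.finite_measure_mono image_mono disjointed_subset) auto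
    also have "\<dots> \<le> measure M (a g ` A i) + n * \<eta> + measure M (space M - (\<Union>i<n. B i))"
      using A B that close[of g i] a.sets_image[OF A_sets] b.sets_image[OF B]
      by (intro a.M.measure_le_by_cells) auto
    finally show ?thesis using R by linarith
  qed
qed

lemma partition_kl_disjointed_partition_ge:
  fixes n :: nat and \<eta> d e :: real
  assumes a: "nonsingular_prob_action M a" and b: "nonsingular_prob_action M b"
    and A: "measurable_partition M n A" and B: "\<And>i. i < n \<Longrightarrow> B i \<in> sets M"
    and close: "\<And>h i j. h \<in> {0, g} \<Longrightarrow> i < n \<Longrightarrow> j < n \<Longrightarrow>
           \<bar>measure M (a h ` A i \<inter> A j) - measure M (b h ` B i \<inter> B j)\<bar> < \<eta>"
    and lsc: "\<And>i p' q'. i < n \<Longrightarrow> \<bar>p' - measure M (A i)\<bar> \<le> d \<Longrightarrow> 0 \<le> p' \<Longrightarrow> q' \<le> 1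
      \<Longrightarrow> q' \<le> measure M (a g ` A i) + d \<Longrightarrow> (0 < p' \<longrightarrow> 0 < q')
      \<Longrightarrow> kl_cell (measure M (A i)) (measure M (a g ` A i)) - e \<le> kl_cell p' q'"
    and "0 < \<eta>" "0 < e" and small: "n * \<eta> + real n ^ 2 * \<eta> \<le> d" "d \<le> (e / 2)\<^sup>2"
  shows "partition_kl M (act_measure M a g) n A - (n + 1) * e
       \<le> partition_kl M (act_measure M b g) (Suc n) (disjointed_partition M n B)"
proof -
  interpret a: nonsingular_prob_action M a by fact
  interpret b: nonsingular_prob_action M b by fact
  have est_cell: "\<bar>measure M (disjointed B i) - measure M (A i)\<bar> \<le> n * \<eta>" if "i < n" for i
    using B close that by (rule weak_containment_cell_estimates(1)[OF a b A])
  have est_image: "measure M (b g ` disjointed B i) \<le> measure M (a g ` A i) + n * \<eta> + real n ^ 2 * \<eta>"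
    if "i < n" for i
    using B close that by (rule weak_containment_cell_estimates(2)[OF a b A])
  have est_rest: "measure M (space M - (\<Union>i<n. B i)) \<le> real n ^ 2 * \<eta>"
    using B close by (rule weak_containment_cell_estimates(3)[OF a b A])
  have \<eta>_nonneg: "0 \<le> n * \<eta>" "0 \<le> real n ^ 2 * \<eta>" using \<open>0 < \<eta>\<close> by simp_all
  define C where "C = disjointed_partition M n B"
  have C_sets: "C i \<in> sets M" for i
    using B by (auto simp: C_def disjointed_partition_def intro!: sets_disjointed)
  have positive: "0 < measure M (C i) \<longrightarrow> 0 < measure M (b g ` C i)" for i
    using b.measure_image_eq_0_iff[OF C_sets] by (simp add: less_le)
  have "kl_cell (measure M (A i)) (measure M (a g ` A i)) - e \<le> kl_cell (measure M (C i)) (measure M (b g ` C i))"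
    if "i < n" for i
  proof (rule lsc[OF that _ _ a.M.prob_le_1 _ positive])
    have "C i = disjointed B i" using that by (simp add: C_def disjointed_partition_def)
    then show "\<bar>measure M (C i) - measure M (A i)\<bar> \<le> d" "measure M (b g ` C i) \<le> measure M (a g ` A i) + d"
      using est_cell[OF that] est_image[OF that] small \<eta>_nonneg by auto
  qed simp
  then have "(\<Sum>i<n. kl_cell (measure M (A i)) (measure M (a g ` A i)) - e)
      \<le> (\<Sum>i<n. kl_cell (measure M (C i)) (measure M (b g ` C i)))"
    by (intro sum_mono) simp
  moreover have "- e \<le> kl_cell (measure M (C n)) (measure M (b g ` C n))"
  proof (rule kl_cell_ge_neg[OF \<open>0 < e\<close> _ _ a.M.prob_le_1 positive[rule_format]])
    show "measure M (C n) \<le> (e / 2)\<^sup>2"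
      using est_rest small \<eta>_nonneg by (simp add: C_def disjointed_partition_def)
  qed simp
  moreover have "partition_kl M (act_measure M a g) n A = (\<Sum>i<n. kl_cell (measure M (A i)) (measure M (a g ` A i)))"
    using A by (simp add: partition_kl_def a.measure_act_measure measurable_partition_def)
  moreover have "partition_kl M (act_measure M b g) (Suc n) C
      = (\<Sum>i<n. kl_cell (measure M (C i)) (measure M (b g ` C i))) + kl_cell (measure M (C n)) (measure M (b g ` C n))"
    by (simp add: partition_kl_def b.measure_act_measure C_sets)
  ultimately show ?thesis unfolding C_def[symmetric] by (simp add: sum_subtractf algebra_simps)
qed

lemma partition_kl_transfer:
  assumes a: "nonsingular_prob_action M a" and b: "nonsingular_prob_action M b"
    and wc: "weakly_contained M a b" and A: "measurable_partition M n A" and "0 < e"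
  shows "\<exists>n' A'. measurable_partition M n' A'
           \<and> partition_kl M (act_measure M a g) n A - e \<le> partition_kl M (act_measure M b g) n' A'"
proof -
  interpret a: nonsingular_prob_action M a by fact
  have A_sets: "A i \<in> sets M" if "i < n" for i using A that by (simp add: measurable_partition_def)
  define e' where "e' = e / (n + 1)"
  have "0 < e'" using \<open>0 < e\<close> by (simp add: e'_def)
  obtain d where "0 < d" "d \<le> (e' / 2)\<^sup>2"
    and lsc: "\<And>i p' q'. i < n \<Longrightarrow> \<bar>p' - measure M (A i)\<bar> \<le> d \<Longrightarrow> 0 \<le> p' \<Longrightarrow> q' \<le> 1
      \<Longrightarrow> q' \<le> measure M (a g ` A i) + d \<Longrightarrow> (0 < p' \<longrightarrow> 0 < q')
      \<Longrightarrow> kl_cell (measure M (A i)) (measure M (a g ` A i)) - e' \<le> kl_cell p' q'"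
  proof (rule kl_cell_lower_semicontinuous_uniform[where r = "(e' / 2)\<^sup>2"])
    show "0 < measure M (a g ` A i)" if "i < n" "0 < measure M (A i)" for i
      using that a.measure_image_eq_0_iff[OF A_sets[OF \<open>i < n\<close>]] by (simp add: less_le)
  qed (use \<open>0 < e'\<close> in auto)
  define \<eta> where "\<eta> = d / (n + real n ^ 2 + 1)"
  have "0 < \<eta>" unfolding \<eta>_def using \<open>0 < d\<close> by (intro divide_pos_pos add_nonneg_pos) auto
  have "(n + real n ^ 2) * \<eta> \<le> (n + real n ^ 2 + 1) * \<eta>" using \<open>0 < \<eta>\<close> by simp
  also have "\<dots> = d" unfolding \<eta>_def using add_nonneg_pos[of "n + real n ^ 2" 1] by simp
  finally have \<eta>_small: "n * \<eta> + real n ^ 2 * \<eta> \<le> d" by (simp add: algebra_simps)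
  obtain B where B: "\<And>i. i < n \<Longrightarrow> B i \<in> sets M"
    and close: "\<And>h i j. h \<in> {0, g} \<Longrightarrow> i < n \<Longrightarrow> j < n \<Longrightarrow>
      \<bar>measure M (a h ` A i \<inter> A j) - measure M (b h ` B i \<inter> B j)\<bar> < \<eta>"
    using weakly_containedE[OF wc \<open>0 < \<eta>\<close>, where F = "{0, g}" and n = n and A = A] A_sets by auto
  have "partition_kl M (act_measure M a g) n A - (n + 1) * e'
      \<le> partition_kl M (act_measure M b g) (Suc n) (disjointed_partition M n B)"
    using B close lsc \<open>0 < \<eta>\<close> \<open>0 < e'\<close> \<eta>_small \<open>d \<le> (e' / 2)\<^sup>2\<close>
    by (rule partition_kl_disjointed_partition_ge[OF a b A])
  then have "partition_kl M (act_measure M a g) n A - e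
      \<le> partition_kl M (act_measure M b g) (Suc n) (disjointed_partition M n B)"
    by (simp add: e'_def)
  moreover have "measurable_partition M (Suc n) (disjointed_partition M n B)"
    using B by (rule measurable_partition_disjointed_partition)
  ultimately show ?thesis by (intro exI conjI)
qed

lemma weakly_contained_relative_entropy_le:
  assumes a: "nonsingular_prob_action M a" and b: "nonsingular_prob_action M b"
    and "weakly_contained M a b"
  shows "relative_entropy M (act_measure M a g) \<le> relative_entropy M (act_measure M b g)"
proof (rule relative_entropy_le_by_partitions)
  show "equivalent_prob_measures M (act_measure M a g)" "equivalent_prob_measures M (act_measure M b g)"
    using a b by (simp_all add: nonsingular_prob_action.equivalent_prob_measures_act)
  fix n A and e :: real
  assume "measurable_partition M n A" "0 < e"
  then show "\<exists>n' A'. measurable_partition M n' A'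
      \<and> partition_kl M (act_measure M a g) n A - e \<le> partition_kl M (act_measure M b g) n' A'"
    by (rule partition_kl_transfer[OF assms])
qed

theorem theorem1:
  fixes m :: "'g::{group_add,countable} pmf"
    and M :: "'x::polish_space measure"
    and a b :: "'g \<Rightarrow> 'x \<Rightarrow> 'x"
  assumes "standard_prob_space M"
    and "stationary_action m M a"
    and "stationary_action m M b"
    and "weakly_equivalent M a b"
  shows "furstenberg_entropy m M a = furstenberg_entropy m M b"
proof -
  have "prob_space M" "space M = UNIV"
    using assms(1) sets_eq_imp_space_eq[of M borel] by (auto simp: standard_prob_space_def)
  then have a: "nonsingular_prob_action M a" and b: "nonsingular_prob_action M b"
    using assms(2,3) unfolding stationary_action_def
    by (auto intro: nonsingular_prob_action.intro nonsingular_prob_action_axioms.intro)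
  have "relative_entropy M (act_measure M a g) = relative_entropy M (act_measure M b g)" for g
    using assms(4) unfolding weakly_equivalent_def
    by (intro antisym weakly_contained_relative_entropy_le a b) simp_all
  then show ?thesis
    using furstenberg_entropy_eq_relative_entropy[OF nonsingular_prob_action.equivalent_prob_measures_act[OF a]]
      furstenberg_entropy_eq_relative_entropy[OF nonsingular_prob_action.equivalent_prob_measures_act[OF b]]
    by simp
qed

end
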